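(* If $T,S\in B(X)$ commute and have real spectra ($\sigma(T),\sigma(S)\subset\mathbb{R}$), then $\max\{r(T),r(S)\}\le r(T+iS)$.
   Context: $X$ is a complex Banach space, $B(X)$ the bounded linear operators on $X$; $\sigma(\cdot)$ and $r(\cdot)$ denote spectrum and spectral radius. *)

theory Defs
  imports "HOL-Analysis.Analysis"
begin

class complex_normed_vector = real_normed_vector +
  fixes scaleC :: "complex \<Rightarrow> 'a \<Rightarrow> 'a"
  assumes scaleC_add_right: "scaleC a (x + y) = scaleC a x + scaleC a y"
    and scaleC_add_left: "scaleC (a + b) x = scaleC a x + scaleC b x"
    and scaleC_scaleC: "scaleC a (scaleC b x) = scaleC (a * b) x"
    and scaleC_one: "scaleC 1 x = x"
    and scaleC_of_real: "scaleC (complex_of_real r) x = scaleR r x"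
    and norm_scaleC: "norm (scaleC a x) = cmod a * norm x"

class complex_banach = complex_normed_vector + banach

definition bounded_clinear_op :: "('a::complex_normed_vector \<Rightarrow> 'a) \<Rightarrow> bool" where
  "bounded_clinear_op T \<longleftrightarrow> bounded_linear T \<and> (\<forall>c x. T (scaleC c x) = scaleC c (T x))"

definition op_spectrum :: "('a::complex_normed_vector \<Rightarrow> 'a) \<Rightarrow> complex set" where
  "op_spectrum T = {l. \<not> (\<exists>U. bounded_clinear_op U \<and>
       (\<forall>x. U (T x - scaleC l x) = x) \<and> (\<forall>x. T (U x) - scaleC l (U x) = x))}"

definition spectral_radius_op :: "('a::complex_normed_vector \<Rightarrow> 'a) \<Rightarrow> real" where
  "spectral_radius_op T = Sup (cmod ` op_spectrum T)"

end

theory Submission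
  imports Defs
begin

text \<open>Work in the bicommutant \<open>\<A>\<close> of \<open>{T, S}\<close>: a commutative subalgebra of
\<open>B(X)\<close> that contains the inverses of its invertible elements, so spectra computed in \<open>\<A>\<close>
are the spectra in \<open>B(X)\<close>. A non-invertible element of \<open>\<A>\<close> lies in a maximal ideal \<open>M\<close>
(Zorn), and by Gelfand--Mazur every element of \<open>\<A>\<close> is a scalar \<open>\<chi>\<^sub>M(X)\<close> modulo \<open>M\<close>; hence
\<open>\<sigma>(X) = {\<chi>\<^sub>M(X) | M maximal}\<close> and \<open>\<chi>\<^sub>M(T + iS) = \<chi>\<^sub>M(T) + i \<chi>\<^sub>M(S)\<close>. When both
\<open>\<chi>\<^sub>M(T)\<close> and \<open>\<chi>\<^sub>M(S)\<close> are real, they are the real and imaginary parts of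
\<open>\<chi>\<^sub>M(T + iS)\<close>, so each is bounded in modulus by \<open>|\<chi>\<^sub>M(T + iS)| \<le> r(T + iS)\<close>.

Gelfand--Mazur is proved without complex analysis, in the style of Rickart: if \<open>B\<close> had no
scalar value modulo \<open>M\<close>, then \<open>1 - l B\<close> would be invertible modulo \<open>M\<close> for every \<open>l\<close>,
with an inverse whose quotient norm is continuous in \<open>l\<close>. Averaging these inverses over
the \<open>n\<close>-th roots of unity shows, step by step in \<open>s\<close>, that \<open>s\<^sup>n \<parallel>B\<^sup>n\<parallel>\<^sub>M \<rightarrow> 0\<close> for all \<open>s\<close> up
to any bound, contradicting \<open>\<parallel>B\<^sup>n\<parallel>\<^sub>M \<parallel>B'\<parallel>\<^sub>M\<^sup>n \<ge> 1\<close> for an inverse \<open>B'\<close> of \<open>B\<close> modulo \<open>M\<close>.\<close>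

lemma scaleC_zero_right [simp]: "scaleC c (0::'a::complex_normed_vector) = 0"
  using scaleC_add_right[of c "0::'a" 0] by simp

lemma scaleC_minus_right: "scaleC c (- x) = - scaleC c (x::'a::complex_normed_vector)"
  using scaleC_add_right[of c "-x" x] by (simp add: eq_neg_iff_add_eq_0)

lemma scaleC_diff_right: "scaleC c (x - y) = scaleC c x - scaleC c (y::'a::complex_normed_vector)"
  using scaleC_add_right[of c x "-y"] by (simp add: scaleC_minus_right)

lemma scaleC_left_commute: "scaleC c (scaleC d x) = scaleC d (scaleC c (x::'a::complex_normed_vector))"
  by (simp add: scaleC_scaleC mult.commute)

lemma scaleC_scaleR_commute: "scaleC c (r *\<^sub>R x) = r *\<^sub>R scaleC c (x::'a::complex_normed_vector)"
  by (metis scaleC_left_commute scaleC_of_real)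

lemma bounded_clinear_op_scaleC: "bounded_clinear_op (scaleC c :: 'a::complex_normed_vector \<Rightarrow> 'a)"
proof -
  have "bounded_linear (scaleC c :: 'a \<Rightarrow> 'a)"
    by (rule bounded_linear_intro[where K="cmod c"])
       (auto simp: scaleC_add_right scaleC_scaleR_commute norm_scaleC mult.commute)
  then show ?thesis unfolding bounded_clinear_op_def by (auto simp: scaleC_left_commute)
qed

lemma bounded_clinear_op_add:
  "bounded_clinear_op f \<Longrightarrow> bounded_clinear_op g \<Longrightarrow> bounded_clinear_op (\<lambda>x. f x + g x)"
  by (auto simp: bounded_clinear_op_def bounded_linear_add scaleC_add_right)

lemma bounded_clinear_op_minus: "bounded_clinear_op f \<Longrightarrow> bounded_clinear_op (\<lambda>x. - f x)"
  by (auto simp: bounded_clinear_op_def bounded_linear_minus scaleC_minus_right)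

lemma bounded_clinear_op_diff:
  "bounded_clinear_op f \<Longrightarrow> bounded_clinear_op g \<Longrightarrow> bounded_clinear_op (\<lambda>x. f x - g x)"
  by (auto simp: bounded_clinear_op_def bounded_linear_sub scaleC_diff_right)

lemma bounded_clinear_op_zero: "bounded_clinear_op (\<lambda>x. 0::'a::complex_normed_vector)"
  by (simp add: bounded_clinear_op_def bounded_linear_zero)

lemma bounded_clinear_op_compose:
  "bounded_clinear_op f \<Longrightarrow> bounded_clinear_op g \<Longrightarrow> bounded_clinear_op (\<lambda>x. f (g x))"
  by (auto simp: bounded_clinear_op_def intro: bounded_linear_compose)

lemma bounded_clinear_op_ident: "bounded_clinear_op (\<lambda>x. x)"
  by (simp add: bounded_clinear_op_def bounded_linear_ident)

lemma bounded_clinear_op_scaleR: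
  "bounded_clinear_op f \<Longrightarrow> bounded_clinear_op (\<lambda>x. r *\<^sub>R f x)"
  by (auto simp: bounded_clinear_op_def scaleC_scaleR_commute
           intro: bounded_linear_compose[OF bounded_linear_scaleR_right])

section \<open>The Banach algebra of bounded operators\<close>

typedef (overloaded) 'a bop = "{f::'a::complex_normed_vector \<Rightarrow> 'a. bounded_clinear_op f}"
  morphisms bop_apply Bop
  using bounded_clinear_op_ident by blast

setup_lifting type_definition_bop

instantiation bop :: (complex_normed_vector) real_normed_vector
begin

lift_definition norm_bop :: "'a bop \<Rightarrow> real" is onorm .
lift_definition minus_bop :: "'a bop \<Rightarrow> 'a bop \<Rightarrow> 'a bop" is "\<lambda>f g x. f x - g x"
  by (rule bounded_clinear_op_diff)
lift_definition uminus_bop :: "'a bop \<Rightarrow> 'a bop" is "\<lambda>f x. - f x"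
  by (rule bounded_clinear_op_minus)
lift_definition zero_bop :: "'a bop" is "\<lambda>x. 0"
  by (rule bounded_clinear_op_zero)
lift_definition plus_bop :: "'a bop \<Rightarrow> 'a bop \<Rightarrow> 'a bop" is "\<lambda>f g x. f x + g x"
  by (rule bounded_clinear_op_add)
lift_definition scaleR_bop :: "real \<Rightarrow> 'a bop \<Rightarrow> 'a bop" is "\<lambda>r f x. r *\<^sub>R f x"
  by (rule bounded_clinear_op_scaleR)
definition dist_bop :: "'a bop \<Rightarrow> 'a bop \<Rightarrow> real" where
  "dist_bop a b = norm (a - b)"
definition uniformity_bop :: "('a bop \<times> 'a bop) filter" where
  "uniformity_bop = (INF e\<in>{0 <..}. principal {(x, y). dist x y < e})"
definition open_bop :: "'a bop set \<Rightarrow> bool" where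
  "open_bop U = (\<forall>x\<in>U. \<forall>\<^sub>F (x', y) in uniformity. x' = x \<longrightarrow> y \<in> U)"
definition sgn_bop :: "'a bop \<Rightarrow> 'a bop" where
  "sgn_bop x = inverse (norm x) *\<^sub>R x"

instance
proof
  fix x y z :: "'a bop" and a b :: real
  show "x + y + z = x + (y + z)" by transfer (simp add: add.assoc)
  show "x + y = y + x" by transfer (simp add: add.commute)
  show "0 + x = x" by transfer simp
  show "- x + x = 0" by transfer simp
  show "x - y = x + - y" by transfer simp
  show "a *\<^sub>R (x + y) = a *\<^sub>R x + a *\<^sub>R y" by transfer (simp add: scaleR_add_right)
  show "(a + b) *\<^sub>R x = a *\<^sub>R x + b *\<^sub>R x" by transfer (simp add: scaleR_add_left)
  show "a *\<^sub>R b *\<^sub>R x = (a * b) *\<^sub>R x" by transfer simp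
  show "1 *\<^sub>R x = x" by transfer simp
  show "dist x y = norm (x - y)" by (simp add: dist_bop_def)
  show "sgn x = inverse (norm x) *\<^sub>R x" by (simp add: sgn_bop_def)
  show "(uniformity :: ('a bop \<times> 'a bop) filter) = (INF e\<in>{0 <..}. principal {(x, y). dist x y < e})"
    by (simp add: uniformity_bop_def)
  show "open U = (\<forall>x\<in>U. \<forall>\<^sub>F (x', y) in uniformity. x' = x \<longrightarrow> y \<in> U)" for U :: "'a bop set"
    by (simp add: open_bop_def)
  show "(norm x = 0) = (x = 0)"
    by transfer (auto simp: bounded_clinear_op_def onorm_eq_0)
  show "norm (x + y) \<le> norm x + norm y"
    by transfer (auto simp: bounded_clinear_op_def intro: onorm_triangle)
  show "norm (a *\<^sub>R x) = \<bar>a\<bar> * norm x"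
    by transfer (auto simp: bounded_clinear_op_def onorm_scaleR)
qed

end

lemma bop_eqI: "(\<And>x. bop_apply f x = bop_apply g x) \<Longrightarrow> f = g"
  by (simp add: bop_apply_inject[symmetric] fun_eq_iff)

lemma bounded_clinear_op_bop_apply: "bounded_clinear_op (bop_apply f)"
  using bop_apply by blast

lemma bounded_linear_bop_apply: "bounded_linear (bop_apply f)"
  using bounded_clinear_op_bop_apply unfolding bounded_clinear_op_def by blast

lemma bop_apply_scaleC: "bop_apply f (scaleC c x) = scaleC c (bop_apply f x)"
  using bounded_clinear_op_bop_apply unfolding bounded_clinear_op_def by blast

lemma bop_apply_Bop: "bounded_clinear_op T \<Longrightarrow> bop_apply (Bop T) = T"
  by (rule Bop_inverse) simp

lemma bop_apply_plus [simp]: "bop_apply (f + g) x = bop_apply f x + bop_apply g x"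
  by transfer simp
lemma bop_apply_minus [simp]: "bop_apply (f - g) x = bop_apply f x - bop_apply g x"
  by transfer simp
lemma bop_apply_uminus [simp]: "bop_apply (- f) x = - bop_apply f x"
  by transfer simp
lemma bop_apply_zero [simp]: "bop_apply 0 x = 0"
  by transfer simp
lemma bop_apply_scaleR [simp]: "bop_apply (r *\<^sub>R f) x = r *\<^sub>R bop_apply f x"
  by transfer simp

lemma norm_bop_eq_onorm: "norm f = onorm (bop_apply f)"
  by transfer simp

lemma norm_bop_apply_le: "norm (bop_apply f x) \<le> norm f * norm x"
  unfolding norm_bop_eq_onorm by (rule onorm[OF bounded_linear_bop_apply])

lemma norm_bop_le: "0 \<le> b \<Longrightarrow> (\<And>x. norm (bop_apply f x) \<le> b * norm x) \<Longrightarrow> norm f \<le> b"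
  unfolding norm_bop_eq_onorm by (rule onorm_bound)

instantiation bop :: (complex_normed_vector) "{real_normed_algebra, monoid_mult}"
begin

lift_definition times_bop :: "'a bop \<Rightarrow> 'a bop \<Rightarrow> 'a bop" is "\<lambda>f g x. f (g x)"
  by (rule bounded_clinear_op_compose)
lift_definition one_bop :: "'a bop" is "\<lambda>x. x"
  by (rule bounded_clinear_op_ident)

instance
proof
  fix x y z :: "'a bop" and a :: real
  show "x * y * z = x * (y * z)" by transfer simp
  show "(x + y) * z = x * z + y * z" by transfer simp
  show "x * (y + z) = x * y + x * z"
    by (rule bop_eqI) (simp add: times_bop.rep_eq linear_simps bounded_linear_bop_apply)
  show "a *\<^sub>R x * y = a *\<^sub>R (x * y)" by transfer simp
  show "x * a *\<^sub>R y = a *\<^sub>R (x * y)"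
    by (rule bop_eqI) (simp add: times_bop.rep_eq linear_simps bounded_linear_bop_apply)
  show "1 * x = x" by transfer simp
  show "x * 1 = x" by transfer simp
  show "norm (x * y) \<le> norm x * norm y"
    unfolding norm_bop_eq_onorm times_bop.rep_eq
    using onorm_compose[OF bounded_linear_bop_apply bounded_linear_bop_apply, of x y]
    by (simp add: o_def)
qed

end

lemma bop_apply_times [simp]: "bop_apply (f * g) x = bop_apply f (bop_apply g x)"
  by transfer simp
lemma bop_apply_one [simp]: "bop_apply 1 x = x"
  by transfer simp

lemma norm_one_bop_le: "norm (1::'a::complex_normed_vector bop) \<le> 1"
  by (rule norm_bop_le) simp_all

lemma norm_power_bop_le: "norm ((z::'a::complex_normed_vector bop) ^ n) \<le> norm z ^ n"
proof (induct n)
  case 0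
  then show ?case using norm_one_bop_le by simp
next
  case (Suc n)
  have "norm (z ^ Suc n) \<le> norm z * norm (z ^ n)"
    by (simp add: norm_mult_ineq)
  also have "\<dots> \<le> norm z * norm z ^ n"
    by (rule mult_left_mono[OF Suc]) simp
  finally show ?case by simp
qed

text \<open>Completeness is inherited from the Banach space of bounded real-linear maps:
a limit of complex-linear operators is again complex-linear.\<close>

lemma norm_Blinfun_bop_apply_diff:
  "norm (Blinfun (bop_apply f) - Blinfun (bop_apply g)) = norm (f - g)"
  unfolding norm_blinfun.rep_eq minus_blinfun.rep_eq norm_bop_eq_onorm bop_apply_minus
    bounded_linear_Blinfun_apply[OF bounded_linear_bop_apply] ..

instance bop :: (complex_banach) banach
proof
  fix X :: "nat \<Rightarrow> 'a bop"
  assume "Cauchy X"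
  define Y where "Y n = Blinfun (bop_apply (X n))" for n
  have "Cauchy Y"
    using \<open>Cauchy X\<close> unfolding Cauchy_def dist_norm Y_def norm_Blinfun_bop_apply_diff .
  then obtain L where L: "Y \<longlonglongrightarrow> L"
    using Cauchy_convergent_iff convergent_def by blast
  have pointwise: "(\<lambda>n. bop_apply (X n) v) \<longlonglongrightarrow> blinfun_apply L v" for v
    using blinfun.tendsto[OF L tendsto_const, of v]
    by (simp add: Y_def bounded_linear_Blinfun_apply[OF bounded_linear_bop_apply])
  have "blinfun_apply L (scaleC c v) = scaleC c (blinfun_apply L v)" for c v
  proof (rule LIMSEQ_unique)
    show "(\<lambda>n. scaleC c (bop_apply (X n) v)) \<longlonglongrightarrow> blinfun_apply L (scaleC c v)"
      using pointwise[of "scaleC c v"] by (simp add: bop_apply_scaleC)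
    show "(\<lambda>n. scaleC c (bop_apply (X n) v)) \<longlonglongrightarrow> scaleC c (blinfun_apply L v)"
      using bounded_clinear_op_scaleC[unfolded bounded_clinear_op_def, THEN conjunct1]
      by (rule bounded_linear.tendsto[OF _ pointwise])
  qed
  then have "bounded_clinear_op (blinfun_apply L)"
    unfolding bounded_clinear_op_def using blinfun.bounded_linear_right by auto
  then have "Blinfun (bop_apply (Bop (blinfun_apply L))) = L"
    by (simp add: bop_apply_Bop blinfun_apply_inverse)
  then have "norm (X n - Bop (blinfun_apply L)) = norm (Y n - L)" for n
    using norm_Blinfun_bop_apply_diff[of "X n" "Bop (blinfun_apply L)"] by (simp add: Y_def)
  then have "X \<longlonglongrightarrow> Bop (blinfun_apply L)"
    using L unfolding LIMSEQ_iff by simp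
  then show "convergent X"
    unfolding convergent_def by blast
qed

lift_definition scalar_bop :: "complex \<Rightarrow> 'a::complex_normed_vector bop" is scaleC
  by (rule bounded_clinear_op_scaleC)

lemma bop_apply_scalar_bop [simp]: "bop_apply (scalar_bop c) x = scaleC c x"
  by transfer simp

lemma scalar_bop_mult: "scalar_bop c * scalar_bop d = scalar_bop (c * d)"
  by (rule bop_eqI) (simp add: scaleC_scaleC)

lemma scalar_bop_add: "scalar_bop (c + d) = scalar_bop c + scalar_bop d"
  by (rule bop_eqI) (simp add: scaleC_add_left)

lemma scalar_bop_one [simp]: "scalar_bop 1 = 1"
  by (rule bop_eqI) (simp add: scaleC_one)

lemma scalar_bop_zero [simp]: "scalar_bop 0 = 0"
  by (rule bop_eqI) (simp add: scaleC_of_real[of 0, simplified])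

lemma scalar_bop_diff: "scalar_bop (c - d) = scalar_bop c - scalar_bop d"
  by (metis add_diff_cancel_right' diff_add_cancel scalar_bop_add)

lemma scalar_bop_minus: "scalar_bop (- c) = - scalar_bop c"
  using scalar_bop_diff[of 0 c] by simp

lemma scalar_bop_commute: "scalar_bop c * f = f * scalar_bop c"
  by (rule bop_eqI) (simp add: bop_apply_scaleC)

lemma scalar_bop_sum: "scalar_bop (\<Sum>i\<in>I. g i) = (\<Sum>i\<in>I. scalar_bop (g i))"
  by (induct I rule: infinite_finite_induct) (auto simp: scalar_bop_add)

lemma scalar_bop_mult_power: "(scalar_bop c * f) ^ n = scalar_bop (c ^ n) * f ^ n"
proof (induct n)
  case 0
  then show ?case by simp
next
  case (Suc n)
  have "(scalar_bop c * f) ^ Suc n = scalar_bop c * (f * scalar_bop (c ^ n)) * f ^ n"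
    by (simp add: Suc mult.assoc)
  also have "\<dots> = scalar_bop c * scalar_bop (c ^ n) * f ^ Suc n"
    by (simp add: scalar_bop_commute[of "c ^ n" f, symmetric] mult.assoc)
  finally show ?case
    by (simp add: scalar_bop_mult)
qed

lemma norm_scalar_bop_mult_le: "norm (scalar_bop c * f) \<le> cmod c * norm f"
proof (rule norm_bop_le)
  fix x
  have "norm (bop_apply (scalar_bop c * f) x) = cmod c * norm (bop_apply f x)"
    by (simp add: norm_scaleC)
  also have "\<dots> \<le> cmod c * (norm f * norm x)"
    by (rule mult_left_mono[OF norm_bop_apply_le]) simp
  finally show "norm (bop_apply (scalar_bop c * f) x) \<le> cmod c * norm f * norm x"
    by (simp add: mult.assoc)
qed simp

definition bop_invertible :: "'a::complex_normed_vector bop \<Rightarrow> bool" where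
  "bop_invertible x \<longleftrightarrow> (\<exists>y. x * y = 1 \<and> y * x = 1)"

definition bop_spectrum :: "'a::complex_normed_vector bop \<Rightarrow> complex set" where
  "bop_spectrum X = {l. \<not> bop_invertible (X - scalar_bop l)}"

definition bop_spectral_radius :: "'a::complex_normed_vector bop \<Rightarrow> real" where
  "bop_spectral_radius X = Sup (cmod ` bop_spectrum X)"

lemma op_spectrum_eq_bop_spectrum:
  assumes T: "bounded_clinear_op T"
  shows "op_spectrum T = bop_spectrum (Bop T)"
proof -
  have "(\<exists>U. bounded_clinear_op U \<and> (\<forall>x. U (T x - scaleC l x) = x) \<and>
           (\<forall>x. T (U x) - scaleC l (U x) = x))
        \<longleftrightarrow> bop_invertible (Bop T - scalar_bop l)" for l
  proof
    assume "\<exists>U. bounded_clinear_op U \<and> (\<forall>x. U (T x - scaleC l x) = x) \<and>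
              (\<forall>x. T (U x) - scaleC l (U x) = x)"
    then obtain U where U: "bounded_clinear_op U" "\<And>x. U (T x - scaleC l x) = x"
        "\<And>x. T (U x) - scaleC l (U x) = x"
      by blast
    have "Bop U * (Bop T - scalar_bop l) = 1" "(Bop T - scalar_bop l) * Bop U = 1"
      by (rule bop_eqI, simp add: bop_apply_Bop T U)+
    then show "bop_invertible (Bop T - scalar_bop l)"
      unfolding bop_invertible_def by blast
  next
    assume "bop_invertible (Bop T - scalar_bop l)"
    then obtain V where V: "(Bop T - scalar_bop l) * V = 1" "V * (Bop T - scalar_bop l) = 1"
      unfolding bop_invertible_def by blast
    have "bop_apply V (T x - scaleC l x) = x" "T (bop_apply V x) - scaleC l (bop_apply V x) = x" for x
      using arg_cong[OF V(2), of "\<lambda>g. bop_apply g x"] arg_cong[OF V(1), of "\<lambda>g. bop_apply g x"]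
      by (simp_all add: bop_apply_Bop T)
    then show "\<exists>U. bounded_clinear_op U \<and> (\<forall>x. U (T x - scaleC l x) = x) \<and>
                 (\<forall>x. T (U x) - scaleC l (U x) = x)"
      using bounded_clinear_op_bop_apply by blast
  qed
  then show ?thesis
    unfolding op_spectrum_def bop_spectrum_def by blast
qed

lemma spectral_radius_op_eq_bop_spectral_radius:
  "bounded_clinear_op T \<Longrightarrow> spectral_radius_op T = bop_spectral_radius (Bop T)"
  by (simp add: spectral_radius_op_def bop_spectral_radius_def op_spectrum_eq_bop_spectrum)

lemma bop_invertible_if_norm_one_minus_less:
  fixes x :: "'a::complex_banach bop"
  assumes "norm (1 - x) < 1"
  shows "bop_invertible x"
proof -
  define z where "z = 1 - x"
  have summable: "summable (\<lambda>n. z ^ n)"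
    by (rule summable_comparison_test[OF _ summable_geometric[of "norm z"]])
       (use assms norm_power_bop_le in \<open>auto simp: z_def\<close>)
  define y where "y = (\<Sum>n. z ^ n)"
  have "y = 1 + (\<Sum>n. z ^ Suc n)"
    using suminf_split_head[OF summable] by (simp add: y_def)
  moreover have "z * y = (\<Sum>n. z ^ Suc n)"
    unfolding y_def using suminf_mult[OF summable, of z] by simp
  moreover have "y * z = (\<Sum>n. z ^ Suc n)"
    unfolding y_def using suminf_mult2[OF summable, of z] by (simp add: power_Suc2[symmetric])
  moreover have "x = 1 - z"
    by (simp add: z_def)
  ultimately have "x * y = 1" "y * x = 1"
    by (simp_all add: left_diff_distrib right_diff_distrib)
  then show ?thesis
    unfolding bop_invertible_def by blast
qed

lemma bop_invertible_scalar_mult: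
  assumes "c \<noteq> 0" and "bop_invertible x"
  shows "bop_invertible (scalar_bop c * x)"
proof -
  obtain y where y: "x * y = 1" "y * x = 1"
    using assms(2) unfolding bop_invertible_def by blast
  have cancel: "scalar_bop c * scalar_bop (1 / c) = 1" "scalar_bop (1 / c) * scalar_bop c = 1"
    using assms(1) by (simp_all add: scalar_bop_mult)
  have "scalar_bop c * x * (y * scalar_bop (1 / c)) = scalar_bop c * (x * y) * scalar_bop (1 / c)"
    by (simp add: mult.assoc)
  moreover have "y * scalar_bop (1 / c) * (scalar_bop c * x) = y * (scalar_bop (1 / c) * scalar_bop c) * x"
    by (simp add: mult.assoc)
  ultimately show ?thesis
    using y cancel unfolding bop_invertible_def by (metis mult_1_left mult_1_right)
qed

lemma norm_ge_if_in_bop_spectrum: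
  fixes X :: "'a::complex_banach bop"
  assumes "l \<in> bop_spectrum X"
  shows "cmod l \<le> norm X"
proof (rule ccontr)
  assume "\<not> cmod l \<le> norm X"
  then have big: "norm X < cmod l" and l: "l \<noteq> 0"
    using norm_ge_zero[of X] by auto
  have "norm (1 - (1 - scalar_bop (1 / l) * X)) \<le> cmod (1 / l) * norm X"
    using norm_scalar_bop_mult_le by simp
  also have "\<dots> < 1"
    using big l by (simp add: norm_divide divide_less_eq)
  finally have "bop_invertible (scalar_bop (- l) * (1 - scalar_bop (1 / l) * X))"
    using l by (intro bop_invertible_scalar_mult bop_invertible_if_norm_one_minus_less) auto
  moreover have "scalar_bop (- l) * (1 - scalar_bop (1 / l) * X) = X - scalar_bop l"
    using l by (simp add: right_diff_distrib mult.assoc[symmetric] scalar_bop_mult scalar_bop_minus)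
  ultimately show False
    using assms unfolding bop_spectrum_def by simp
qed

lemma bdd_above_cmod_bop_spectrum:
  "bdd_above (cmod ` bop_spectrum (X::'a::complex_banach bop))"
  by (rule bdd_aboveI[of _ "norm X"]) (auto intro: norm_ge_if_in_bop_spectrum)

section \<open>The bicommutant of a commuting pair and its maximal ideals\<close>

locale commuting_bops =
  fixes T S :: "'a::complex_banach bop"
  assumes commute: "T * S = S * T"
begin

definition bicommutant :: "'a bop set" where
  "bicommutant = {B. \<forall>C. C * T = T * C \<longrightarrow> C * S = S * C \<longrightarrow> B * C = C * B}"

lemma bicommutantI:
  "(\<And>C. C * T = T * C \<Longrightarrow> C * S = S * C \<Longrightarrow> B * C = C * B) \<Longrightarrow> B \<in> bicommutant"
  unfolding bicommutant_def by blast

lemma bicommutantD: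
  "B \<in> bicommutant \<Longrightarrow> C * T = T * C \<Longrightarrow> C * S = S * C \<Longrightarrow> B * C = C * B"
  unfolding bicommutant_def by blast

lemma T_in_bicommutant: "T \<in> bicommutant"
  by (rule bicommutantI) simp

lemma S_in_bicommutant: "S \<in> bicommutant"
  by (rule bicommutantI) simp

lemma scalar_in_bicommutant: "scalar_bop c \<in> bicommutant"
  by (rule bicommutantI) (rule scalar_bop_commute)

lemma one_in_bicommutant: "1 \<in> bicommutant"
  by (rule bicommutantI) simp

lemma zero_in_bicommutant: "0 \<in> bicommutant"
  by (rule bicommutantI) simp

lemma bicommutant_add: "a \<in> bicommutant \<Longrightarrow> b \<in> bicommutant \<Longrightarrow> a + b \<in> bicommutant"
  by (rule bicommutantI) (simp add: distrib_left distrib_right bicommutantD)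

lemma bicommutant_diff: "a \<in> bicommutant \<Longrightarrow> b \<in> bicommutant \<Longrightarrow> a - b \<in> bicommutant"
  by (rule bicommutantI) (simp add: left_diff_distrib right_diff_distrib bicommutantD)

lemma bicommutant_mult:
  assumes a: "a \<in> bicommutant" and b: "b \<in> bicommutant"
  shows "a * b \<in> bicommutant"
proof (rule bicommutantI)
  fix C assume C: "C * T = T * C" "C * S = S * C"
  have "a * b * C = a * (C * b)"
    using bicommutantD[OF b C] by (simp add: mult.assoc)
  also have "\<dots> = C * (a * b)"
    using bicommutantD[OF a C] by (simp add: mult.assoc[symmetric])
  finally show "a * b * C = C * (a * b)" .
qed

lemma bicommutant_power: "a \<in> bicommutant \<Longrightarrow> a ^ n \<in> bicommutant"
  by (induct n) (auto intro: bicommutant_mult one_in_bicommutant)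

lemma bicommutant_sum:
  "(\<And>i. i \<in> I \<Longrightarrow> f i \<in> bicommutant) \<Longrightarrow> (\<Sum>i\<in>I. f i) \<in> bicommutant"
  by (induct I rule: infinite_finite_induct) (auto intro: bicommutant_add zero_in_bicommutant)

lemma bicommutant_commute:
  assumes "a \<in> bicommutant" and b: "b \<in> bicommutant"
  shows "a * b = b * a"
proof (rule bicommutantD[OF assms(1)])
  show "b * T = T * b"
    by (rule bicommutantD[OF b]) (simp_all add: commute)
  show "b * S = S * b"
    by (rule bicommutantD[OF b]) (simp_all add: commute)
qed

lemma bicommutant_inverse:
  assumes b: "b \<in> bicommutant" and inv: "b * y = 1" "y * b = 1"
  shows "y \<in> bicommutant"
proof (rule bicommutantI)
  fix C assume "C * T = T * C" "C * S = S * C"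
  then have bC: "b * C = C * b"
    by (rule bicommutantD[OF b])
  have "y * C = y * C * (b * y)"
    by (simp add: inv)
  also have "\<dots> = y * (b * C) * y"
    by (simp add: bC mult.assoc)
  also have "\<dots> = (y * b) * C * y"
    by (simp add: mult.assoc)
  finally show "y * C = C * y"
    by (simp add: inv)
qed

definition bicomm_ideal :: "'a bop set \<Rightarrow> bool" where
  "bicomm_ideal I \<longleftrightarrow> I \<subseteq> bicommutant \<and> 0 \<in> I \<and> (\<forall>a\<in>I. \<forall>b\<in>I. a + b \<in> I) \<and>
     (\<forall>a\<in>I. \<forall>b\<in>bicommutant. b * a \<in> I)"

definition maximal_bicomm_ideal :: "'a bop set \<Rightarrow> bool" where
  "maximal_bicomm_ideal M \<longleftrightarrow> bicomm_ideal M \<and> 1 \<notin> M \<and>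
     (\<forall>J. bicomm_ideal J \<longrightarrow> 1 \<notin> J \<longrightarrow> M \<subseteq> J \<longrightarrow> J = M)"

lemma bicomm_ideal_Union_chain:
  assumes "C \<noteq> {}" and "subset.chain {J. bicomm_ideal J} C"
  shows "bicomm_ideal (\<Union>C)"
  unfolding bicomm_ideal_def
proof (intro conjI ballI)
  have ideals: "\<And>J. J \<in> C \<Longrightarrow> bicomm_ideal J" and chain: "\<And>X Y. X \<in> C \<Longrightarrow> Y \<in> C \<Longrightarrow> X \<subseteq> Y \<or> Y \<subseteq> X"
    using assms(2) unfolding subset.chain_def by blast+
  show "\<Union>C \<subseteq> bicommutant" "0 \<in> \<Union>C"
    using ideals assms(1) unfolding bicomm_ideal_def by blast+
  fix a b assume "a \<in> \<Union>C"
  then obtain X where X: "X \<in> C" "a \<in> X" by blast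
  show "b * a \<in> \<Union>C" if "b \<in> bicommutant"
    using ideals[OF X(1)] X that unfolding bicomm_ideal_def by blast
  show "a + b \<in> \<Union>C" if b: "b \<in> \<Union>C"
  proof -
    obtain Y where Y: "Y \<in> C" "b \<in> Y" using b by blast
    then have "a \<in> X \<union> Y" "b \<in> X \<union> Y" "X \<union> Y \<in> C"
      using X chain[OF X(1) Y(1)] by (auto simp: sup_absorb1 sup_absorb2)
    then show ?thesis
      using ideals unfolding bicomm_ideal_def by blast
  qed
qed

lemma maximal_bicomm_ideal_extends:
  assumes "bicomm_ideal I" "1 \<notin> I"
  shows "\<exists>M. maximal_bicomm_ideal M \<and> I \<subseteq> M"
proof -
  define F where "F = {J. bicomm_ideal J \<and> 1 \<notin> J \<and> I \<subseteq> J}"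
  have "\<Union>C \<in> F" if "C \<noteq> {}" "subset.chain F C" for C
  proof -
    have CF: "C \<subseteq> F"
      using that(2) unfolding subset.chain_def by blast
    then have "subset.chain {J. bicomm_ideal J} C"
      using that(2) unfolding subset.chain_def F_def by blast
    then have "bicomm_ideal (\<Union>C)"
      by (rule bicomm_ideal_Union_chain[OF that(1)])
    moreover have "1 \<notin> \<Union>C" "I \<subseteq> \<Union>C"
      using CF that(1) unfolding F_def by blast+
    ultimately show ?thesis
      unfolding F_def by blast
  qed
  moreover have "F \<noteq> {}"
    using assms unfolding F_def by blast
  ultimately obtain M where "M \<in> F" "\<forall>X\<in>F. M \<subseteq> X \<longrightarrow> X = M"
    using subset_Zorn_nonempty[of F] by blast
  then show ?thesis
    unfolding maximal_bicomm_ideal_def F_def by blast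
qed

lemma bicomm_ideal_zero: "bicomm_ideal {0}"
  unfolding bicomm_ideal_def using zero_in_bicommutant by simp

lemma bicomm_ideal_add_principal:
  assumes I: "bicomm_ideal I" and X: "X \<in> bicommutant"
  shows "bicomm_ideal {m + X * a | m a. m \<in> I \<and> a \<in> bicommutant}"
    (is "bicomm_ideal ?J")
proof -
  have I_sub: "I \<subseteq> bicommutant" and I_add: "\<And>a b. a \<in> I \<Longrightarrow> b \<in> I \<Longrightarrow> a + b \<in> I"
    and I_mult: "\<And>a b. a \<in> I \<Longrightarrow> b \<in> bicommutant \<Longrightarrow> b * a \<in> I" and "0 \<in> I"
    using I unfolding bicomm_ideal_def by blast+
  show ?thesis
    unfolding bicomm_ideal_def
  proof (intro conjI ballI)
    show "?J \<subseteq> bicommutant"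
      using X I_sub by (blast intro: bicommutant_add bicommutant_mult)
    show "0 \<in> ?J"
      using \<open>0 \<in> I\<close> zero_in_bicommutant by force
    fix u v assume "u \<in> ?J"
    then obtain m a where u: "u = m + X * a" "m \<in> I" "a \<in> bicommutant"
      by blast
    show "u + v \<in> ?J" if v: "v \<in> ?J"
    proof -
      obtain n b where "v = n + X * b" "n \<in> I" "b \<in> bicommutant"
        using v by blast
      moreover from this have "u + v = (m + n) + X * (a + b)"
        using u by (simp add: distrib_left add_ac)
      ultimately show ?thesis
        using u by (blast intro: I_add bicommutant_add)
    qed
    show "v * u \<in> ?J" if v: "v \<in> bicommutant"
    proof -
      have "v * u = v * m + X * (v * a)"
        using u v X bicommutant_commute[of v X] by (simp add: distrib_left mult.assoc[symmetric])
      then show ?thesis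
        using u v by (blast intro: bicommutant_mult I_mult)
    qed
  qed
qed

lemma maximal_bicomm_ideal_if_not_invertible:
  assumes X: "X \<in> bicommutant" and not_inv: "\<not> bop_invertible X"
  shows "\<exists>M. maximal_bicomm_ideal M \<and> X \<in> M"
proof -
  let ?J = "{m + X * a | m a. m \<in> {0} \<and> a \<in> bicommutant}"
  have "1 \<notin> ?J"
    using not_inv bicommutant_commute[OF X] unfolding bop_invertible_def by fastforce
  then obtain M where "maximal_bicomm_ideal M" "?J \<subseteq> M"
    using maximal_bicomm_ideal_extends[OF bicomm_ideal_add_principal[OF bicomm_ideal_zero X]]
    by blast
  moreover have "X \<in> ?J"
    using one_in_bicommutant by force
  ultimately show ?thesis
    by blast
qed

end

section \<open>Quotient by a maximal ideal\<close>

locale bicomm_quotient = commuting_bops +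
  fixes M :: "'a bop set"
  assumes maximal: "maximal_bicomm_ideal M"
begin

lemma ideal: "bicomm_ideal M"
  using maximal unfolding maximal_bicomm_ideal_def by blast

lemma one_notin_ideal: "1 \<notin> M"
  using maximal unfolding maximal_bicomm_ideal_def by blast

lemma ideal_subset: "a \<in> M \<Longrightarrow> a \<in> bicommutant"
  using ideal unfolding bicomm_ideal_def by blast

lemma zero_in_ideal: "0 \<in> M"
  using ideal unfolding bicomm_ideal_def by blast

lemma ideal_add: "a \<in> M \<Longrightarrow> b \<in> M \<Longrightarrow> a + b \<in> M"
  using ideal unfolding bicomm_ideal_def by blast

lemma ideal_mult_left: "a \<in> M \<Longrightarrow> b \<in> bicommutant \<Longrightarrow> b * a \<in> M"
  using ideal unfolding bicomm_ideal_def by blast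

lemma ideal_mult_right: "a \<in> M \<Longrightarrow> b \<in> bicommutant \<Longrightarrow> a * b \<in> M"
  using ideal_mult_left bicommutant_commute ideal_subset by metis

lemma ideal_scalar_mult: "a \<in> M \<Longrightarrow> scalar_bop c * a \<in> M"
  using ideal_mult_left scalar_in_bicommutant by blast

lemma ideal_minus: "a \<in> M \<Longrightarrow> - a \<in> M"
  using ideal_scalar_mult[of a "-1"] by (simp add: scalar_bop_minus)

lemma ideal_diff: "a \<in> M \<Longrightarrow> b \<in> M \<Longrightarrow> a - b \<in> M"
  using ideal_add[OF _ ideal_minus, of a b] by simp

lemma ideal_sum: "(\<And>i. i \<in> I \<Longrightarrow> f i \<in> M) \<Longrightarrow> (\<Sum>i\<in>I. f i) \<in> M"
  by (induct I rule: infinite_finite_induct) (auto intro: ideal_add zero_in_ideal)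

lemma not_invertible_if_in_ideal: "Z \<in> M \<Longrightarrow> \<not> bop_invertible Z"
  using bicommutant_inverse[OF ideal_subset] ideal_mult_left one_notin_ideal
  unfolding bop_invertible_def by metis

lemma scalar_in_ideal_iff: "scalar_bop c \<in> M \<longleftrightarrow> c = 0"
proof
  assume "scalar_bop c \<in> M"
  then have "c \<noteq> 0 \<Longrightarrow> scalar_bop (1 / c) * scalar_bop c \<in> M"
    by (rule ideal_scalar_mult)
  then show "c = 0"
    using one_notin_ideal by (auto simp: scalar_bop_mult)
qed (simp add: zero_in_ideal)

lemma scalar_value_unique:
  assumes "X - scalar_bop a \<in> M" "X - scalar_bop b \<in> M"
  shows "a = b"
proof -
  have "(X - scalar_bop b) - (X - scalar_bop a) \<in> M"
    using assms by (rule ideal_diff[rotated])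
  then show ?thesis
    by (simp add: scalar_bop_diff[symmetric] scalar_in_ideal_iff)
qed

lemma inverse_mod_ideal:
  assumes X: "X \<in> bicommutant" and "X \<notin> M"
  shows "\<exists>Y\<in>bicommutant. X * Y - 1 \<in> M"
proof -
  define J where "J = {m + X * a | m a. m \<in> M \<and> a \<in> bicommutant}"
  have "bicomm_ideal J"
    unfolding J_def by (rule bicomm_ideal_add_principal[OF ideal X])
  moreover have "M \<subseteq> J" "X \<in> J"
    unfolding J_def using zero_in_bicommutant zero_in_ideal one_in_bicommutant by force+
  ultimately have "1 \<in> J"
    using maximal \<open>X \<notin> M\<close> unfolding maximal_bicomm_ideal_def by blast
  then obtain m a where "1 = m + X * a" "m \<in> M" "a \<in> bicommutant"
    unfolding J_def by blast
  then show ?thesis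
    by (metis add_diff_cancel_right' diff_add_cancel ideal_minus minus_diff_eq)
qed

definition qnorm :: "'a bop \<Rightarrow> real" where
  "qnorm x = Inf ((\<lambda>a. norm (x - a)) ` M)"

lemma qnorm_le: "a \<in> M \<Longrightarrow> qnorm x \<le> norm (x - a)"
  unfolding qnorm_def by (rule cInf_lower) (auto intro: bdd_belowI[of _ 0])

lemma qnorm_greatest: "(\<And>a. a \<in> M \<Longrightarrow> c \<le> norm (x - a)) \<Longrightarrow> c \<le> qnorm x"
  unfolding qnorm_def using zero_in_ideal by (intro cInf_greatest) auto

lemma qnorm_nonneg: "0 \<le> qnorm x"
  by (rule qnorm_greatest) simp

lemma qnorm_less_obtain:
  assumes "qnorm x < r"
  obtains a where "a \<in> M" "norm (x - a) < r"
  using assms zero_in_ideal unfolding qnorm_def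
  by (subst (asm) cInf_less_iff) (auto intro: bdd_belowI[of _ 0])

lemma qnorm_le_norm: "qnorm x \<le> norm x"
  using qnorm_le[OF zero_in_ideal] by simp

lemma qnorm_ideal: "m \<in> M \<Longrightarrow> qnorm m = 0"
  using qnorm_le[of m m] qnorm_nonneg[of m] by simp

lemma qnorm_cong:
  assumes "x - y \<in> M"
  shows "qnorm x = qnorm y"
proof -
  have "qnorm x \<le> qnorm y" if "x - y \<in> M" for x y
  proof (rule qnorm_greatest)
    fix a assume "a \<in> M"
    then have "qnorm x \<le> norm (x - (a + (x - y)))"
      using that by (intro qnorm_le ideal_add)
    then show "qnorm x \<le> norm (y - a)"
      by (simp add: algebra_simps)
  qed
  moreover have "y - x \<in> M"
    using ideal_minus[OF assms] by simp
  ultimately show ?thesis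
    using assms by (simp add: antisym)
qed

lemma qnorm_add: "qnorm (x + y) \<le> qnorm x + qnorm y"
proof (rule field_le_epsilon)
  fix e :: real assume "0 < e"
  obtain a where "a \<in> M" "norm (x - a) < qnorm x + e / 2"
    using \<open>0 < e\<close> qnorm_less_obtain[of x "qnorm x + e / 2"] by auto
  moreover obtain b where "b \<in> M" "norm (y - b) < qnorm y + e / 2"
    using \<open>0 < e\<close> qnorm_less_obtain[of y "qnorm y + e / 2"] by auto
  moreover have "norm ((x + y) - (a + b)) \<le> norm (x - a) + norm (y - b)"
    by (metis add_diff_add norm_triangle_ineq)
  ultimately show "qnorm (x + y) \<le> qnorm x + qnorm y + e"
    using qnorm_le[OF ideal_add, of a b "x + y"] by linarith
qed

lemma qnorm_minus: "qnorm (- x) = qnorm x"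
proof -
  have "qnorm (- y) \<le> qnorm y" for y
  proof (rule qnorm_greatest)
    fix a assume "a \<in> M"
    then have "qnorm (- y) \<le> norm (- y - (- a))"
      by (intro qnorm_le ideal_minus)
    then show "qnorm (- y) \<le> norm (y - a)"
      by (simp add: norm_minus_commute)
  qed
  from this[of x] this[of "- x"] show ?thesis
    by simp
qed

lemma qnorm_diff: "qnorm (x - y) \<le> qnorm x + qnorm y"
  using qnorm_add[of x "- y"] by (simp add: qnorm_minus)

lemma qnorm_mult:
  assumes x: "x \<in> bicommutant" and y: "y \<in> bicommutant"
  shows "qnorm (x * y) \<le> qnorm x * qnorm y"
proof (rule field_le_epsilon)
  fix d :: real assume d: "0 < d"
  define e where "e = min 1 (d / (qnorm x + qnorm y + 1))"
  have K: "0 < qnorm x + qnorm y + 1"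
    using qnorm_nonneg[of x] qnorm_nonneg[of y] by linarith
  have "e \<le> d / (qnorm x + qnorm y + 1)"
    by (simp add: e_def)
  then have e: "0 < e" "e \<le> 1" "e * (qnorm x + qnorm y + 1) \<le> d"
    using d K by (simp_all add: e_def le_divide_eq)
  obtain a where a: "a \<in> M" "norm (x - a) < qnorm x + e"
    using qnorm_less_obtain[of x "qnorm x + e"] e by auto
  obtain b where b: "b \<in> M" "norm (y - b) < qnorm y + e"
    using qnorm_less_obtain[of y "qnorm y + e"] e by auto
  have "x * b + a * y - a * b \<in> M"
    using a b x y
    by (intro ideal_diff ideal_add ideal_mult_left[OF b(1) x] ideal_mult_right[OF a(1) y]
        ideal_mult_right[OF a(1) ideal_subset[OF b(1)]])
  then have "qnorm (x * y) \<le> norm (x * y - (x * b + a * y - a * b))"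
    by (rule qnorm_le)
  also have "\<dots> = norm ((x - a) * (y - b))"
    by (simp add: algebra_simps)
  also have "\<dots> \<le> norm (x - a) * norm (y - b)"
    by (rule norm_mult_ineq)
  also have "\<dots> \<le> (qnorm x + e) * (qnorm y + e)"
    using a b e qnorm_nonneg[of x] by (intro mult_mono) auto
  also have "\<dots> \<le> qnorm x * qnorm y + e * (qnorm x + qnorm y + 1)"
    using e qnorm_nonneg[of x] qnorm_nonneg[of y] by (simp add: algebra_simps)
  finally show "qnorm (x * y) \<le> qnorm x * qnorm y + d"
    using e by linarith
qed

lemma qnorm_scalar_mult: "qnorm (scalar_bop c * x) \<le> cmod c * qnorm x"
proof (rule field_le_epsilon)
  fix d :: real assume d: "0 < d"
  define e where "e = d / (cmod c + 1)"
  have c: "0 < cmod c + 1"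
    using norm_ge_zero[of c] by linarith
  then have e: "0 < e"
    using d by (simp add: e_def)
  have "cmod c * e \<le> (cmod c + 1) * e"
    using e by simp
  then have e': "cmod c * e \<le> d"
    using c by (simp add: e_def)
  obtain a where a: "a \<in> M" "norm (x - a) < qnorm x + e"
    using qnorm_less_obtain[of x "qnorm x + e"] e by auto
  have "qnorm (scalar_bop c * x) \<le> norm (scalar_bop c * x - scalar_bop c * a)"
    using ideal_scalar_mult[OF a(1)] by (rule qnorm_le)
  also have "\<dots> \<le> cmod c * norm (x - a)"
    using norm_scalar_bop_mult_le by (simp add: right_diff_distrib[symmetric])
  also have "\<dots> \<le> cmod c * (qnorm x + e)"
    using a by (intro mult_left_mono) auto
  finally show "qnorm (scalar_bop c * x) \<le> cmod c * qnorm x + d"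
    using e' by (simp add: algebra_simps)
qed

lemma qnorm_scalar_mult_eq:
  assumes "c \<noteq> 0"
  shows "qnorm (scalar_bop c * x) = cmod c * qnorm x"
proof (rule antisym[OF qnorm_scalar_mult])
  have "qnorm x = qnorm (scalar_bop (1 / c) * (scalar_bop c * x))"
    using assms by (simp add: scalar_bop_mult flip: mult.assoc)
  also have "\<dots> \<le> cmod (1 / c) * qnorm (scalar_bop c * x)"
    by (rule qnorm_scalar_mult)
  finally show "cmod c * qnorm x \<le> qnorm (scalar_bop c * x)"
    using assms by (simp add: norm_divide field_simps)
qed

lemma qnorm_sum: "qnorm (\<Sum>i\<in>I. g i) \<le> (\<Sum>i\<in>I. qnorm (g i))"
  by (induct I rule: infinite_finite_induct)
     (auto simp: qnorm_ideal[OF zero_in_ideal] intro: order_trans[OF qnorm_add])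

lemma qnorm_one: "qnorm 1 = 1"
proof (rule antisym)
  show "qnorm 1 \<le> 1"
    by (rule order_trans[OF qnorm_le_norm norm_one_bop_le])
  show "1 \<le> qnorm 1"
  proof (rule ccontr)
    assume "\<not> 1 \<le> qnorm 1"
    then obtain a where "a \<in> M" "norm (1 - a) < 1"
      using qnorm_less_obtain[of 1 1] by auto
    then show False
      using bop_invertible_if_norm_one_minus_less not_invertible_if_in_ideal by blast
  qed
qed

lemma one_le_qnorm_power_mult_power:
  assumes X: "X \<in> bicommutant" and Y: "Y \<in> bicommutant" and inv: "X * Y - 1 \<in> M"
  shows "1 \<le> qnorm (X ^ n) * qnorm Y ^ n"
proof -
  have "X ^ n * Y ^ n - 1 \<in> M"
  proof (induct n)
    case (Suc n)
    have "X ^ Suc n * Y ^ Suc n = X * (X ^ n * Y) * Y ^ n"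
      by (simp add: mult.assoc)
    also have "\<dots> = (X * Y) * (X ^ n * Y ^ n)"
      using bicommutant_commute[OF bicommutant_power[OF X, of n] Y] by (simp add: mult.assoc)
    finally have "X ^ Suc n * Y ^ Suc n - 1 = (X * Y - 1) * (X ^ n * Y ^ n) + (X ^ n * Y ^ n - 1)"
      by (simp add: algebra_simps)
    also have "\<dots> \<in> M"
      using Suc X Y by (intro ideal_add ideal_mult_right[OF inv] bicommutant_mult bicommutant_power)
    finally show ?case .
  qed (simp add: zero_in_ideal)
  then have "1 = qnorm (X ^ n * Y ^ n)"
    by (simp add: qnorm_cong qnorm_one)
  also have "\<dots> \<le> qnorm (X ^ n) * qnorm (Y ^ n)"
    using X Y by (intro qnorm_mult bicommutant_power)
  also have "qnorm (Y ^ n) \<le> qnorm Y ^ n"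
  proof (induct n)
    case (Suc n)
    have "qnorm (Y ^ Suc n) \<le> qnorm Y * qnorm (Y ^ n)"
      using Y by (simp add: qnorm_mult bicommutant_power)
    also have "\<dots> \<le> qnorm Y * qnorm Y ^ n"
      using Suc qnorm_nonneg by (intro mult_left_mono) auto
    finally show ?case
      by simp
  qed (simp add: qnorm_one)
  then have "qnorm (X ^ n) * qnorm (Y ^ n) \<le> qnorm (X ^ n) * qnorm Y ^ n"
    using qnorm_nonneg by (intro mult_left_mono) auto
  finally show ?thesis .
qed

lemma qnorm_minus_one_le_if_inverse_mod:
  assumes inv: "(1 - W) * H - 1 \<in> M" and W: "W \<in> bicommutant" and H: "H \<in> bicommutant"
    and small: "qnorm W \<le> 1 / 16"
  shows "qnorm (H - 1) \<le> 1 / 15"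
proof -
  have "(H - 1) - W * H = (1 - W) * H - 1"
    by (simp add: algebra_simps)
  then have "qnorm (H - 1) = qnorm (W * H)"
    using inv by (intro qnorm_cong) (simp only:)
  also have "\<dots> \<le> qnorm W * qnorm H"
    by (rule qnorm_mult[OF W H])
  also have "\<dots> \<le> 1 / 16 * (qnorm (H - 1) + 1)"
    using qnorm_add[of "H - 1" 1] qnorm_one small qnorm_nonneg[of H] qnorm_nonneg[of W]
    by (intro mult_mono) auto
  finally show ?thesis
    by simp
qed

lemma qnorm_le_if_inverse_mod_near_one:
  assumes inv: "(1 - W) * H - 1 \<in> M" and W: "W \<in> bicommutant" and H: "H \<in> bicommutant"
    and near: "qnorm (H - 1) \<le> 1 / 4"
  shows "qnorm W \<le> 1 / 3"
proof -
  have "(1 - W) * H - 1 = (1 - W) * (H - 1) - W"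
    by (simp add: right_diff_distrib)
  then have "qnorm W = qnorm ((1 - W) * (H - 1))"
    using inv by (intro qnorm_cong[symmetric]) simp
  also have "\<dots> \<le> qnorm (1 - W) * qnorm (H - 1)"
    using W H by (intro qnorm_mult bicommutant_diff one_in_bicommutant)
  also have "\<dots> \<le> (1 + qnorm W) * (1 / 4)"
    using qnorm_diff[of 1 W] qnorm_one near qnorm_nonneg by (intro mult_mono) auto
  finally show ?thesis
    by simp
qed

end

section \<open>Gelfand--Mazur: every maximal ideal has a scalar value\<close>

definition unit_root :: "nat \<Rightarrow> complex" where
  "unit_root n = cis (2 * pi / real n)"

lemma norm_unit_root_power [simp]: "cmod (unit_root n ^ j) = 1"
  by (simp add: unit_root_def norm_power)

lemma unit_root_power_n:
  assumes "0 < n"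
  shows "(unit_root n ^ j) ^ n = 1"
proof -
  have "unit_root n ^ n = cis (real n * (2 * pi / real n))"
    unfolding unit_root_def by (rule Complex.DeMoivre)
  also have "\<dots> = 1"
    using assms by simp
  finally show ?thesis
    by (metis power_mult mult.commute power_one)
qed

lemma sum_unit_root_powers_eq_0:
  assumes "0 < m" "m < n"
  shows "(\<Sum>j<n. (unit_root n ^ m) ^ j) = 0"
proof -
  have inj: "inj_on (\<lambda>k. cis (2 * pi * real k / real n)) {..<n}"
    by (rule bij_betw_imp_inj_on[OF Complex.bij_betw_roots_unity]) (use assms in simp)
  have "cis (2 * pi * real m / real n) \<noteq> cis (2 * pi * real 0 / real n)"
    using assms by (subst inj_on_eq_iff[OF inj]) auto
  moreover have "cis (2 * pi / real n) ^ m = cis (2 * pi * real m / real n)"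
    by (subst Complex.DeMoivre) (rule arg_cong[where f = cis], simp)
  ultimately have "unit_root n ^ m \<noteq> 1"
    by (simp add: unit_root_def)
  then show ?thesis
    using unit_root_power_n[of n m] assms by (simp add: sum_gp_strict)
qed

lemma sum_powers_mult_one_minus:
  "(\<Sum>m<n. y ^ m) * (1 - y) = 1 - (y::'a::{ring, monoid_mult}) ^ n"
proof (induct n)
  case (Suc n)
  have "(\<Sum>m<Suc n. y ^ m) * (1 - y) = (\<Sum>m<n. y ^ m) * (1 - y) + y ^ n * (1 - y)"
    by (simp add: distrib_right)
  also have "\<dots> = 1 - y ^ n + (y ^ n - y ^ n * y)"
    by (simp only: Suc) (simp add: right_diff_distrib)
  finally show ?case
    by (simp add: power_commutes)
qed simp

text \<open>Averaging the geometric series of \<open>\<zeta> l X\<close> over the \<open>n\<close>-th roots of unity \<open>\<zeta>\<close>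
kills all powers \<open>X^m\<close> with \<open>0 < m < n\<close>.\<close>

lemma sum_unit_root_geometric_sums:
  assumes n: "0 < n"
  shows "(\<Sum>j<n. \<Sum>m<n. (scalar_bop (unit_root n ^ j * l) * X) ^ m) = scalar_bop (of_nat n)"
proof -
  define w where "w = unit_root n"
  have "(\<Sum>j<n. \<Sum>m<n. (scalar_bop (w ^ j * l) * X) ^ m)
      = (\<Sum>m<n. scalar_bop (l ^ m * (\<Sum>j<n. (w ^ m) ^ j)) * X ^ m)"
    by (subst sum.swap)
       (simp add: scalar_bop_mult_power scalar_bop_sum sum_distrib_right sum_distrib_left
         power_mult_distrib mult.commute flip: power_mult)
  also have "\<dots> = (\<Sum>m\<in>{0}. scalar_bop (l ^ m * (\<Sum>j<n. (w ^ m) ^ j)) * X ^ m)"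
    using sum_unit_root_powers_eq_0[of _ n] n unfolding w_def[symmetric]
    by (intro sum.mono_neutral_right) auto
  also have "\<dots> = scalar_bop (of_nat n)"
    by simp
  finally show ?thesis
    unfolding w_def .
qed

locale no_scalar_value = bicomm_quotient +
  fixes B :: "'a bop"
  assumes B_in_bicommutant: "B \<in> bicommutant"
    and no_value: "\<And>c. B - scalar_bop c \<notin> M"
begin

lemma one_minus_scalar_mult_notin_ideal: "1 - scalar_bop l * B \<notin> M"
proof
  assume in_M: "1 - scalar_bop l * B \<in> M"
  show False
  proof (cases "l = 0")
    case True
    then show False
      using in_M one_notin_ideal by simp
  next
    case False
    then have "scalar_bop (- 1 / l) * (1 - scalar_bop l * B) = B - scalar_bop (1 / l)"
      by (simp add: right_diff_distrib mult.assoc[symmetric] scalar_bop_mult scalar_bop_minus)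
    then show False
      using ideal_scalar_mult[OF in_M, of "- 1 / l"] no_value by simp
  qed
qed

text \<open>Normalised as an inverse of \<open>1 - l B\<close> (rather than \<open>B - l\<close>) modulo \<open>M\<close>, so that it is
defined for every \<open>l\<close>, including \<open>l = 0\<close>.\<close>

definition resolvent :: "complex \<Rightarrow> 'a bop" where
  "resolvent l = (SOME y. y \<in> bicommutant \<and> (1 - scalar_bop l * B) * y - 1 \<in> M)"

lemma resolvent_in_bicommutant: "resolvent l \<in> bicommutant"
  and resolvent_inverse_mod: "(1 - scalar_bop l * B) * resolvent l - 1 \<in> M"
proof -
  have "1 - scalar_bop l * B \<in> bicommutant"
    by (intro bicommutant_diff bicommutant_mult one_in_bicommutant scalar_in_bicommutant
        B_in_bicommutant)
  then have "\<exists>y. y \<in> bicommutant \<and> (1 - scalar_bop l * B) * y - 1 \<in> M"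
    using inverse_mod_ideal one_minus_scalar_mult_notin_ideal by blast
  then have "resolvent l \<in> bicommutant \<and> (1 - scalar_bop l * B) * resolvent l - 1 \<in> M"
    unfolding resolvent_def by (rule someI_ex)
  then show "resolvent l \<in> bicommutant" "(1 - scalar_bop l * B) * resolvent l - 1 \<in> M"
    by blast+
qed

lemma resolvent_identity:
  "resolvent a - resolvent b - scalar_bop (a - b) * (B * resolvent a * resolvent b) \<in> M"
proof -
  define Pa where "Pa = 1 - scalar_bop a * B"
  define Pb where "Pb = 1 - scalar_bop b * B"
  define ma where "ma = Pa * resolvent a - 1"
  define mb where "mb = Pb * resolvent b - 1"
  have "scalar_bop (a - b) * B = Pb - Pa"
    unfolding Pa_def Pb_def by (simp add: scalar_bop_diff left_diff_distrib)
  then have "scalar_bop (a - b) * (B * resolvent a * resolvent b)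
      = (Pb * resolvent b) * resolvent a - (Pa * resolvent a) * resolvent b"
    using bicommutant_commute[OF resolvent_in_bicommutant resolvent_in_bicommutant, of a b]
    by (simp add: left_diff_distrib mult.assoc flip: mult.assoc[of _ B])
  also have "\<dots> = (mb + 1) * resolvent a - (ma + 1) * resolvent b"
    by (simp add: ma_def mb_def)
  finally have "resolvent a - resolvent b - scalar_bop (a - b) * (B * resolvent a * resolvent b)
      = ma * resolvent b - mb * resolvent a"
    by (simp add: algebra_simps)
  moreover have "ma \<in> M" "mb \<in> M"
    unfolding ma_def mb_def Pa_def Pb_def by (rule resolvent_inverse_mod)+
  ultimately show ?thesis
    by (simp add: ideal_diff ideal_mult_right resolvent_in_bicommutant)
qed

lemma qnorm_resolvent_diff_le:
  "qnorm (resolvent a - resolvent b)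
     \<le> cmod (a - b) * norm B * qnorm (resolvent a) * qnorm (resolvent b)"
proof -
  have "qnorm (resolvent a - resolvent b)
      = qnorm (scalar_bop (a - b) * (B * resolvent a * resolvent b))"
    by (rule qnorm_cong[OF resolvent_identity])
  also have "\<dots> \<le> cmod (a - b) * qnorm (B * resolvent a * resolvent b)"
    by (rule qnorm_scalar_mult)
  also have "qnorm (B * resolvent a * resolvent b) \<le> qnorm B * qnorm (resolvent a) * qnorm (resolvent b)"
    using qnorm_mult[OF B_in_bicommutant resolvent_in_bicommutant, of a] qnorm_nonneg
    by (intro order_trans[OF qnorm_mult] mult_right_mono)
       (auto intro: bicommutant_mult B_in_bicommutant resolvent_in_bicommutant)
  also have "qnorm B \<le> norm B"
    by (rule qnorm_le_norm)
  finally show ?thesis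
    using qnorm_nonneg[of "resolvent a"] qnorm_nonneg[of "resolvent b"]
    by (simp add: mult_right_mono mult_left_mono mult.assoc)
qed

lemma qnorm_resolvent_dist_le:
  "\<bar>qnorm (resolvent a) - qnorm (resolvent b)\<bar>
     \<le> cmod (a - b) * norm B * qnorm (resolvent a) * qnorm (resolvent b)"
  using qnorm_resolvent_diff_le[of a b] qnorm_resolvent_diff_le[of b a]
    qnorm_add[of "resolvent a - resolvent b" "resolvent b"]
    qnorm_add[of "resolvent b - resolvent a" "resolvent a"]
  by (simp add: norm_minus_commute mult_ac)

lemma isCont_qnorm_resolvent: "isCont (\<lambda>l. qnorm (resolvent l)) b"
proof -
  define g where "g l = qnorm (resolvent l)" for l
  define C where "C = 2 * norm B * g b ^ 2"
  have g: "0 \<le> g l" for l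
    unfolding g_def by (rule qnorm_nonneg)
  have dist: "\<bar>g a - g b\<bar> \<le> cmod (a - b) * norm B * g a * g b" for a
    unfolding g_def by (rule qnorm_resolvent_dist_le)
  have "\<bar>g a - g b\<bar> \<le> C * cmod (a - b)" if near: "cmod (a - b) * norm B * g b < 1 / 2" for a
  proof -
    have "g a \<le> g b + (cmod (a - b) * norm B * g b) * g a"
      using dist[of a] by (simp add: mult_ac)
    also have "\<dots> \<le> g b + g a / 2"
      using mult_right_mono[OF less_imp_le[OF near] g[of a]] by simp
    finally have "g a \<le> 2 * g b"
      by simp
    then have "cmod (a - b) * norm B * g a * g b \<le> cmod (a - b) * norm B * (2 * g b) * g b"
      using g by (intro mult_right_mono mult_left_mono) auto
    then show ?thesis
      using dist[of a] by (simp add: C_def power2_eq_square mult_ac)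
  qed
  moreover have "eventually (\<lambda>a. cmod (a - b) * norm B * g b < 1 / 2) (at b)"
  proof (rule order_tendstoD(2))
    show "((\<lambda>a. cmod (a - b) * norm B * g b) \<longlongrightarrow> cmod (b - b) * norm B * g b) (at b)"
      by (intro tendsto_intros)
  qed simp
  ultimately have "eventually (\<lambda>a. norm (g a - g b) \<le> C * cmod (a - b)) (at b)"
    by (auto elim: eventually_mono)
  moreover have "((\<lambda>a. C * cmod (a - b)) \<longlongrightarrow> 0) (at b)"
    by (intro tendsto_mult_right_zero tendsto_norm_zero LIM_zero tendsto_ident_at)
  ultimately have "((\<lambda>a. g a - g b) \<longlongrightarrow> 0) (at b)"
    by (rule Lim_null_comparison)
  then show ?thesis
    unfolding isCont_def g_def by (rule LIM_zero_cancel)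
qed

lemma qnorm_resolvent_bounded: "\<exists>K\<ge>0. \<forall>l. cmod l \<le> \<rho> \<longrightarrow> qnorm (resolvent l) \<le> K"
proof -
  have "compact ((\<lambda>l. qnorm (resolvent l)) ` cball 0 \<rho>)"
    by (intro compact_continuous_image continuous_at_imp_continuous_on ballI
        isCont_qnorm_resolvent compact_cball)
  then obtain K where K: "\<forall>l\<in>cball 0 \<rho>. norm (qnorm (resolvent l)) \<le> K"
    by (auto dest!: compact_imp_bounded simp: bounded_iff)
  have "qnorm (resolvent l) \<le> max K 0" if "cmod l \<le> \<rho>" for l
    using K[rule_format, of l] that abs_ge_self[of "qnorm (resolvent l)"] by (simp add: mem_cball_0)
  then show ?thesis
    by (intro exI[of _ "max K 0"]) simp
qed

text \<open>Averaging the resolvent over the \<open>n\<close>-th roots of unity gives an inverse of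
\<open>1 - l\<^sup>n B\<^sup>n\<close> modulo \<open>M\<close> that is Lipschitz in \<open>l\<close> uniformly in \<open>n\<close>; this replaces the
Cauchy integral formula of the usual proof.\<close>

definition averaged_resolvent :: "nat \<Rightarrow> complex \<Rightarrow> 'a bop" where
  "averaged_resolvent n l = scalar_bop (1 / of_nat n) * (\<Sum>j<n. resolvent (unit_root n ^ j * l))"

lemma averaged_resolvent_in_bicommutant: "averaged_resolvent n l \<in> bicommutant"
  unfolding averaged_resolvent_def
  by (intro bicommutant_mult scalar_in_bicommutant bicommutant_sum resolvent_in_bicommutant)

lemma averaged_resolvent_inverse_mod:
  assumes n: "0 < n"
  shows "(1 - scalar_bop (l ^ n) * B ^ n) * averaged_resolvent n l - 1 \<in> M"
proof -
  define W where "W = scalar_bop (l ^ n) * B ^ n"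
  define R where "R j = resolvent (unit_root n ^ j * l)" for j
  define G where "G j = (\<Sum>m<n. (scalar_bop (unit_root n ^ j * l) * B) ^ m)" for j
  have each: "(1 - W) * R j - G j \<in> M" for j
  proof -
    define y where "y = scalar_bop (unit_root n ^ j * l) * B"
    have "y ^ n = W"
      unfolding y_def W_def scalar_bop_mult_power power_mult_distrib unit_root_power_n[OF n] by simp
    then have "1 - W = G j * (1 - y)"
      unfolding G_def y_def[symmetric] sum_powers_mult_one_minus by simp
    then have "(1 - W) * R j - G j = G j * ((1 - y) * R j - 1)"
      by (simp add: mult.assoc[symmetric] right_diff_distrib)
    also have "\<dots> \<in> M"
      unfolding y_def R_def G_def
      by (intro ideal_mult_left resolvent_inverse_mod bicommutant_sum bicommutant_power
          bicommutant_mult scalar_in_bicommutant B_in_bicommutant)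
    finally show ?thesis .
  qed
  have "(1 - W) * (\<Sum>j<n. R j) - scalar_bop (of_nat n) = (\<Sum>j<n. (1 - W) * R j - G j)"
    using sum_unit_root_geometric_sums[OF n, of l B]
    by (simp add: G_def sum_distrib_left sum_subtractf)
  also have "\<dots> \<in> M"
    by (rule ideal_sum) (rule each)
  finally have "scalar_bop (1 / of_nat n) * ((1 - W) * (\<Sum>j<n. R j) - scalar_bop (of_nat n)) \<in> M"
    by (rule ideal_scalar_mult)
  moreover have "scalar_bop (1 / of_nat n) * ((1 - W) * (\<Sum>j<n. R j) - scalar_bop (of_nat n))
      = (scalar_bop (1 / of_nat n) * (1 - W)) * (\<Sum>j<n. R j) - 1"
    using n by (simp add: right_diff_distrib scalar_bop_mult flip: mult.assoc)
  also have "\<dots> = (1 - W) * averaged_resolvent n l - 1"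
    by (simp add: scalar_bop_commute averaged_resolvent_def R_def mult.assoc)
  ultimately show ?thesis
    by (simp add: W_def)
qed

lemma qnorm_averaged_resolvent_diff_le:
  assumes n: "0 < n" and K: "\<forall>l. cmod l \<le> \<rho> \<longrightarrow> qnorm (resolvent l) \<le> K"
    and a: "cmod a \<le> \<rho>" and b: "cmod b \<le> \<rho>"
  shows "qnorm (averaged_resolvent n a - averaged_resolvent n b) \<le> norm B * K\<^sup>2 * cmod (a - b)"
proof -
  have K0: "0 \<le> K"
    using K a qnorm_nonneg[of "resolvent a"] by fastforce
  have each: "qnorm (resolvent (w * a) - resolvent (w * b)) \<le> norm B * K\<^sup>2 * cmod (a - b)"
    if w: "cmod w = 1" for w
  proof -
    have "qnorm (resolvent (w * a) - resolvent (w * b))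
        \<le> cmod (w * a - w * b) * norm B * qnorm (resolvent (w * a)) * qnorm (resolvent (w * b))"
      by (rule qnorm_resolvent_diff_le)
    also have "\<dots> \<le> cmod (a - b) * norm B * K * K"
      using K a b w qnorm_nonneg K0
      by (intro mult_mono mult_nonneg_nonneg) (auto simp: norm_mult right_diff_distrib[symmetric])
    finally show ?thesis
      by (simp add: power2_eq_square mult_ac)
  qed
  have "averaged_resolvent n a - averaged_resolvent n b
      = scalar_bop (1 / of_nat n) *
          (\<Sum>j<n. resolvent (unit_root n ^ j * a) - resolvent (unit_root n ^ j * b))"
    by (simp add: averaged_resolvent_def right_diff_distrib sum_subtractf)
  also have "qnorm \<dots> \<le> cmod (1 / of_nat n) *
      (\<Sum>j<n. qnorm (resolvent (unit_root n ^ j * a) - resolvent (unit_root n ^ j * b)))"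
    by (intro order_trans[OF qnorm_scalar_mult] mult_left_mono qnorm_sum) simp
  also have "\<dots> \<le> cmod (1 / of_nat n) * (\<Sum>j<n. norm B * K\<^sup>2 * cmod (a - b))"
    by (intro mult_left_mono sum_mono each) simp_all
  also have "\<dots> = norm B * K\<^sup>2 * cmod (a - b)"
    using n by (simp add: norm_divide)
  finally show ?thesis .
qed

text \<open>The averaged resolvent at \<open>s\<close> is close to \<open>1\<close>, hence, by the Lipschitz bound, so is
the one at \<open>s + h\<close>; this forces \<open>(s + h)\<^sup>n B\<^sup>n\<close> to be small modulo \<open>M\<close>.\<close>

lemma qnorm_power_growth_bound:
  assumes n: "0 < n" and s: "0 \<le> s" and h: "0 < h" "s + h \<le> \<rho>"
    and K: "\<forall>l. cmod l \<le> \<rho> \<longrightarrow> qnorm (resolvent l) \<le> K" and hK: "norm B * K\<^sup>2 * h \<le> 1 / 8"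
    and small: "s ^ n * qnorm (B ^ n) \<le> 1 / 16"
  shows "(s + h) ^ n * qnorm (B ^ n) \<le> 1 / 3"
proof -
  define H0 where "H0 = averaged_resolvent n (complex_of_real s)"
  define H1 where "H1 = averaged_resolvent n (complex_of_real (s + h))"
  define W0 where "W0 = scalar_bop (complex_of_real s ^ n) * B ^ n"
  define W1 where "W1 = scalar_bop (complex_of_real (s + h) ^ n) * B ^ n"
  have Bn: "B ^ n \<in> bicommutant"
    by (intro bicommutant_power B_in_bicommutant)
  then have W: "W0 \<in> bicommutant" "W1 \<in> bicommutant"
    unfolding W0_def W1_def by (simp_all add: bicommutant_mult scalar_in_bicommutant)
  have "qnorm W0 \<le> 1 / 16"
    using qnorm_scalar_mult[of "complex_of_real s ^ n" "B ^ n"] small s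
    by (simp add: W0_def norm_power)
  then have "qnorm (H0 - 1) \<le> 1 / 15"
    using averaged_resolvent_inverse_mod[OF n] W averaged_resolvent_in_bicommutant
    unfolding H0_def W0_def by (intro qnorm_minus_one_le_if_inverse_mod)
  moreover have "qnorm (H1 - H0) \<le> norm B * K\<^sup>2 * cmod (complex_of_real (s + h) - complex_of_real s)"
  proof -
    have "cmod (complex_of_real (s + h)) \<le> \<rho>" "cmod (complex_of_real s) \<le> \<rho>"
      by (simp_all only: norm_of_real) (use s h in simp_all)
    then show ?thesis
      unfolding H0_def H1_def by (rule qnorm_averaged_resolvent_diff_le[OF n K])
  qed
  ultimately have "qnorm (H1 - 1) \<le> 1 / 4"
    using qnorm_add[of "H1 - H0" "H0 - 1"] hK h by (simp flip: of_real_diff)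
  then have "qnorm W1 \<le> 1 / 3"
    using averaged_resolvent_inverse_mod[OF n] W averaged_resolvent_in_bicommutant
    unfolding H1_def W1_def by (intro qnorm_le_if_inverse_mod_near_one)
  moreover have "qnorm W1 = cmod (complex_of_real (s + h)) ^ n * qnorm (B ^ n)"
    unfolding W1_def using s h by (simp del: of_real_add add: qnorm_scalar_mult_eq norm_power)
  ultimately show ?thesis
    using s h by (simp del: of_real_add)
qed

lemma qnorm_power_decay_step:
  assumes s: "0 \<le> s" and h: "0 < h" "s + h \<le> \<rho>"
    and K: "\<forall>l. cmod l \<le> \<rho> \<longrightarrow> qnorm (resolvent l) \<le> K" and hK: "norm B * K\<^sup>2 * h \<le> 1 / 8"
    and decay: "(\<lambda>n. s ^ n * qnorm (B ^ n)) \<longlonglongrightarrow> 0"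
  shows "(\<lambda>n. (s + h / 2) ^ n * qnorm (B ^ n)) \<longlonglongrightarrow> 0"
proof -
  define q where "q = (s + h / 2) / (s + h)"
  have q: "0 \<le> q" "q < 1"
    using s h by (auto simp: q_def)
  have "eventually (\<lambda>n. 0 < n \<and> s ^ n * qnorm (B ^ n) < 1 / 16) sequentially"
    using eventually_conj[OF eventually_gt_at_top[of 0] order_tendstoD(2)[OF decay, of "1 / 16"]]
    by simp
  then have "eventually (\<lambda>n. (s + h / 2) ^ n * qnorm (B ^ n) \<le> q ^ n) sequentially"
  proof (rule eventually_mono)
    fix n assume "0 < n \<and> s ^ n * qnorm (B ^ n) < 1 / 16"
    then have "(s + h) ^ n * qnorm (B ^ n) \<le> 1 / 3"
      by (intro qnorm_power_growth_bound[OF _ s h K hK]) auto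
    then have "(s + h) ^ n * qnorm (B ^ n) \<le> 1"
      by simp
    then have "q ^ n * ((s + h) ^ n * qnorm (B ^ n)) \<le> q ^ n"
      using q by (simp add: mult_left_le)
    then show "(s + h / 2) ^ n * qnorm (B ^ n) \<le> q ^ n"
      using s h by (simp add: q_def power_divide)
  qed
  moreover have "eventually (\<lambda>n. 0 \<le> (s + h / 2) ^ n * qnorm (B ^ n)) sequentially"
    using s h qnorm_nonneg by simp
  ultimately show ?thesis
    using q by (intro tendsto_sandwich[OF _ _ tendsto_const LIMSEQ_power_zero]) auto
qed

lemma qnorm_power_decay:
  assumes h: "0 < h" and K: "\<forall>l. cmod l \<le> \<rho> \<longrightarrow> qnorm (resolvent l) \<le> K"
    and hK: "norm B * K\<^sup>2 * h \<le> 1 / 8"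
  shows "real k * (h / 2) + h \<le> \<rho> \<Longrightarrow> (\<lambda>n. (real k * (h / 2)) ^ n * qnorm (B ^ n)) \<longlonglongrightarrow> 0"
proof (induct k)
  case 0
  have "eventually (\<lambda>n. (real 0 * (h / 2)) ^ n * qnorm (B ^ n) = 0) sequentially"
    using eventually_gt_at_top[of 0] by (rule eventually_mono) simp
  then show ?case
    by (rule tendsto_eventually)
next
  case (Suc k)
  have "real k * (h / 2) \<le> real (Suc k) * (h / 2)"
    using h by (intro mult_right_mono) auto
  then have "real k * (h / 2) + h \<le> \<rho>"
    using Suc.prems by linarith
  then have "(\<lambda>n. (real k * (h / 2) + h / 2) ^ n * qnorm (B ^ n)) \<longlonglongrightarrow> 0"
    using qnorm_power_decay_step[OF _ h(1) _ K hK Suc.hyps] h by simp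
  moreover have "real k * (h / 2) + h / 2 = real (Suc k) * (h / 2)"
    by (simp add: distrib_right)
  ultimately show ?case
    by (metis (no_types))
qed

lemma contradiction: False
proof -
  obtain B' where B': "B' \<in> bicommutant" "B * B' - 1 \<in> M"
    using inverse_mod_ideal[OF B_in_bicommutant] no_value[of 0] by auto
  define Q where "Q = qnorm B'"
  obtain K where K: "\<forall>l. cmod l \<le> Q + 2 \<longrightarrow> qnorm (resolvent l) \<le> K"
    using qnorm_resolvent_bounded by blast
  define h where "h = min 1 (1 / (8 * (norm B * K\<^sup>2 + 1)))"
  have h: "0 < h" "h \<le> 1"
    by (simp_all add: h_def add_nonneg_pos)
  have pos: "0 < norm B * K\<^sup>2 + 1"
    by (simp add: add_nonneg_pos)
  have "norm B * K\<^sup>2 * h \<le> (norm B * K\<^sup>2 + 1) * (1 / (8 * (norm B * K\<^sup>2 + 1)))"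
    using h by (intro mult_mono) (auto simp: h_def)
  also have "\<dots> = 1 / 8"
    using pos by simp
  finally have hK: "norm B * K\<^sup>2 * h \<le> 1 / 8" .
  define k where "k = nat \<lceil>Q / (h / 2)\<rceil>"
  define s where "s = real k * (h / 2)"
  have "0 \<le> Q / (h / 2)"
    using qnorm_nonneg[of B'] h by (simp add: Q_def)
  then have "Q / (h / 2) \<le> real k" "real k < Q / (h / 2) + 1"
    using ceiling_correct[of "Q / (h / 2)"] unfolding k_def by auto
  then have Qs: "Q \<le> s" "s + h \<le> Q + 2"
    using h by (auto simp: s_def field_simps)
  then obtain n where n: "s ^ n * qnorm (B ^ n) < 1"
    using order_tendstoD(2)[OF qnorm_power_decay[OF h(1) K hK], of k 1]
    by (auto simp: s_def dest: eventually_happens)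
  have "1 \<le> qnorm (B ^ n) * Q ^ n"
    unfolding Q_def by (rule one_le_qnorm_power_mult_power[OF B_in_bicommutant B'])
  also have "\<dots> \<le> qnorm (B ^ n) * s ^ n"
    using Qs qnorm_nonneg[of B'] qnorm_nonneg by (intro mult_left_mono power_mono) (auto simp: Q_def)
  finally show False
    using n by (simp add: mult.commute)
qed

end

context bicomm_quotient
begin

theorem gelfand_mazur:
  assumes "X \<in> bicommutant"
  shows "\<exists>c. X - scalar_bop c \<in> M"
proof (rule ccontr)
  assume "\<not> (\<exists>c. X - scalar_bop c \<in> M)"
  then interpret no_scalar_value T S M X
    using assms by unfold_locales blast+
  show False
    by (rule contradiction)
qed

end

section \<open>Characters and the spectrum\<close>

context commuting_bops
begin

definition character :: "'a bop set \<Rightarrow> 'a bop \<Rightarrow> complex" where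
  "character M X = (THE c. X - scalar_bop c \<in> M)"

end

context bicomm_quotient
begin

lemma character_eqI: "X - scalar_bop c \<in> M \<Longrightarrow> character M X = c"
  unfolding character_def using scalar_value_unique by blast

lemma character_mod_ideal: "X \<in> bicommutant \<Longrightarrow> X - scalar_bop (character M X) \<in> M"
  using gelfand_mazur character_eqI by metis

lemma character_in_bop_spectrum: "X \<in> bicommutant \<Longrightarrow> character M X \<in> bop_spectrum X"
  using character_mod_ideal not_invertible_if_in_ideal unfolding bop_spectrum_def by blast

lemma character_T_plus_ii_S:
  "character M (T + scalar_bop \<i> * S) = character M T + \<i> * character M S"
proof (rule character_eqI)
  have "(T + scalar_bop \<i> * S) - scalar_bop (character M T + \<i> * character M S)
      = (T - scalar_bop (character M T)) + scalar_bop \<i> * (S - scalar_bop (character M S))"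
    by (simp add: scalar_bop_add right_diff_distrib mult.assoc scalar_bop_mult)
  also have "\<dots> \<in> M"
    by (intro ideal_add ideal_scalar_mult character_mod_ideal T_in_bicommutant S_in_bicommutant)
  finally show "(T + scalar_bop \<i> * S) - scalar_bop (character M T + \<i> * character M S) \<in> M" .
qed

end

context commuting_bops
begin

lemma bop_spectrum_eq_characters:
  assumes "X \<in> bicommutant"
  shows "bop_spectrum X = (\<lambda>M. character M X) ` {M. maximal_bicomm_ideal M}"
proof (intro equalityI subsetI)
  fix l assume "l \<in> bop_spectrum X"
  then obtain M where M: "maximal_bicomm_ideal M" "X - scalar_bop l \<in> M"
    using maximal_bicomm_ideal_if_not_invertible assms
    by (auto simp: bop_spectrum_def intro: bicommutant_diff scalar_in_bicommutant)
  then interpret bicomm_quotient T S M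
    by unfold_locales
  show "l \<in> (\<lambda>M. character M X) ` {M. maximal_bicomm_ideal M}"
    using M character_eqI by force
next
  fix l assume "l \<in> (\<lambda>M. character M X) ` {M. maximal_bicomm_ideal M}"
  then obtain M where "maximal_bicomm_ideal M" "l = character M X"
    by blast
  then interpret bicomm_quotient T S M
    by unfold_locales
  show "l \<in> bop_spectrum X"
    using \<open>l = character M X\<close> character_in_bop_spectrum assms by simp
qed

lemma bop_spectral_radius_le_of_real_spectra:
  assumes "bop_spectrum T \<subseteq> \<real>" and "bop_spectrum S \<subseteq> \<real>"
  shows "max (bop_spectral_radius T) (bop_spectral_radius S)
           \<le> bop_spectral_radius (T + scalar_bop \<i> * S)"
proof -
  let ?A = "T + scalar_bop \<i> * S"
  let ?\<M> = "{M. maximal_bicomm_ideal M}"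
  have A: "?A \<in> bicommutant"
    by (intro bicommutant_add bicommutant_mult scalar_in_bicommutant T_in_bicommutant
        S_in_bicommutant)
  have radius: "bop_spectral_radius X = (SUP M\<in>?\<M>. cmod (character M X))"
    if "X \<in> bicommutant" for X
    using that by (simp add: bop_spectral_radius_def bop_spectrum_eq_characters image_image)
  have dominated: "cmod (character M T) \<le> cmod (character M ?A)"
    "cmod (character M S) \<le> cmod (character M ?A)" if "M \<in> ?\<M>" for M
  proof -
    interpret bicomm_quotient T S M
      using that by unfold_locales simp
    have "character M T \<in> \<real>" "character M S \<in> \<real>"
      using assms character_in_bop_spectrum T_in_bicommutant S_in_bicommutant by blast+
    then show "cmod (character M T) \<le> cmod (character M ?A)"
      "cmod (character M S) \<le> cmod (character M ?A)"
      unfolding character_T_plus_ii_S by (auto elim!: Reals_cases simp: norm_complex_def)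
  qed
  have bdd: "bdd_above ((\<lambda>M. cmod (character M ?A)) ` ?\<M>)"
    using bdd_above_cmod_bop_spectrum[of ?A] by (simp add: bop_spectrum_eq_characters[OF A] image_image)
  show ?thesis
    unfolding radius[OF T_in_bicommutant] radius[OF S_in_bicommutant] radius[OF A]
    using dominated bdd
    by (cases "?\<M> = {}") (simp_all del: Collect_empty_eq, (intro conjI cSUP_mono; blast))
qed

end

theorem lemma2p15:
  fixes T S :: "'a::complex_banach \<Rightarrow> 'a"
  assumes "bounded_clinear_op T" and "bounded_clinear_op S"
    and "T \<circ> S = S \<circ> T"
    and "op_spectrum T \<subseteq> \<real>" and "op_spectrum S \<subseteq> \<real>"
  shows "max (spectral_radius_op T) (spectral_radius_op S)
           \<le> spectral_radius_op (\<lambda>x. T x + scaleC \<i> (S x))"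
proof -
  have A: "bounded_clinear_op (\<lambda>x. T x + scaleC \<i> (S x))"
    using assms(1,2) by (intro bounded_clinear_op_add bounded_clinear_op_compose[OF bounded_clinear_op_scaleC])
  interpret commuting_bops "Bop T" "Bop S"
    by unfold_locales (rule bop_eqI, use assms(3) in \<open>simp add: bop_apply_Bop assms(1,2) fun_eq_iff\<close>)
  have "Bop (\<lambda>x. T x + scaleC \<i> (S x)) = Bop T + scalar_bop \<i> * Bop S"
    by (rule bop_eqI) (simp add: bop_apply_Bop assms(1,2) A)
  then show ?thesis
    using bop_spectral_radius_le_of_real_spectra assms A
    by (simp add: spectral_radius_op_eq_bop_spectral_radius op_spectrum_eq_bop_spectrum)
qed

end
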